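(* Let $\mathbb{M}^d$ and $\mathbb{H}^{d'}$ be compact two-point homogeneous spaces with associated parameters $\beta,\beta'$, and let $K$ be a real, continuous, isotropic and positive definite kernel on $\mathbb{M}^d\times\mathbb{H}^{d'}$ with isotropic part $K_i^{d,d'}$. If $r,\rho\in(-1,1)$, then the double series $\sum_{k,l=0}^\infty a_{k,l}(K_i^{d,d'})P_k^{(d-2)/2,\beta}(1)P_l^{(d'-2)/2,\beta'}(1)r^k\rho^l$ converges.
   Context: A compact two-point homogeneous space $\mathbb{M}^d$ of dimension $d$ is one of: the unit sphere $S^d$ ($d\ge 1$), $\mathbb{P}^d(\mathbb{R})$ ($d\ge 2$), $\mathbb{P}^d(\mathbb{C})$ ($d=4,6,\dots$), $\mathbb{P}^d(\mathbb{H})$ ($d=8,12,\dots$), or $\mathbb{P}^{16}(Cay)$; its associated parameter $\beta$ is respectively $(d-2)/2,-1/2,0,1,3$. Each space carries its geodesic distance $|xy|$, normalized so that all geodesics have length $2\pi$. $P_k^{\alpha,\beta}$ is the Jacobi polynomial of degree $k$, and $h_k^{\alpha,\beta}=\int_{-1}^1 (P_k^{\alpha,\beta})^2(1-t)^\alpha(1+t)^\beta dt$. A kernel $K$ on $\mathbb{M}^d\times\mathbb{H}^{d'}$ is isotropic if $K((x,w),(y,z))=K_i^{d,d'}(\cos(|xy|/2),\cos(|wz|/2))$ for a function $K_i^{d,d'}$ on $[-1,1]^2$; it is positive definite if symmetric and all matrices $[K(p_i,p_j)]$ for distinct points $p_1,\dots,p_n$ are nonnegative definite. The coefficients are $a_{k,l}(K_i^{d,d'})=\frac{1}{h_k^{(d-2)/2,\beta}h_l^{(d'-2)/2,\beta'}}\int_{[-1,1]^2}K_i^{d,d'}(t,s)P_k^{(d-2)/2,\beta}(t)P_l^{(d'-2)/2,\beta'}(s)(1-t)^{(d-2)/2}(1+t)^{\beta}(1-s)^{(d'-2)/2}(1+s)^{\beta'}dt\,ds$.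 *)

theory Defs
  imports "HOL-Analysis.Analysis"
begin

definition jacobi :: "nat \<Rightarrow> real \<Rightarrow> real \<Rightarrow> real \<Rightarrow> real" where
  "jacobi k a b x = (\<Sum>s\<le>k. ((real k + a) gchoose (k - s)) * ((real k + b) gchoose s)
       * ((x - 1) / 2) ^ s * ((x + 1) / 2) ^ (k - s))"

definition jacobi_h :: "nat \<Rightarrow> real \<Rightarrow> real \<Rightarrow> real" where
  "jacobi_h k a b = (LINT t:{-1..1}|lborel. (jacobi k a b t)\<^sup>2 * (1 - t) powr a * (1 + t) powr b)"

definition jacobi_coeff2 ::
  "real \<Rightarrow> real \<Rightarrow> real \<Rightarrow> real \<Rightarrow> (real \<Rightarrow> real \<Rightarrow> real) \<Rightarrow> nat \<Rightarrow> nat \<Rightarrow> real" where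
  "jacobi_coeff2 a b a' b' F k l =
     (1 / (jacobi_h k a b * jacobi_h l a' b')) *
     (LINT p:({-1..1} \<times> {-1..1})|lborel.
        F (fst p) (snd p) * jacobi k a b (fst p) * jacobi l a' b' (snd p)
        * (1 - fst p) powr a * (1 + fst p) powr b * (1 - snd p) powr a' * (1 + snd p) powr b')"

section \<open>Cayley--Dickson algebras (level 0,1,2,3 = R, C, H, O)\<close>

text \<open>Elements of level n are functions nat => real supported in {..<2^n}.\<close>
definition cd_lo :: "nat \<Rightarrow> (nat \<Rightarrow> real) \<Rightarrow> nat \<Rightarrow> real" where
  "cd_lo h a = (\<lambda>i. if i < h then a i else 0)"
definition cd_hi :: "nat \<Rightarrow> (nat \<Rightarrow> real) \<Rightarrow> nat \<Rightarrow> real" where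
  "cd_hi h a = (\<lambda>i. if i < h then a (i + h) else 0)"
definition cd_glue :: "nat \<Rightarrow> (nat \<Rightarrow> real) \<Rightarrow> (nat \<Rightarrow> real) \<Rightarrow> nat \<Rightarrow> real" where
  "cd_glue h p q = (\<lambda>i. if i < h then p i else if i < 2 * h then q (i - h) else 0)"

fun cd_conj :: "nat \<Rightarrow> (nat \<Rightarrow> real) \<Rightarrow> nat \<Rightarrow> real" where
  "cd_conj 0 a = (\<lambda>i. if i = 0 then a 0 else 0)"
| "cd_conj (Suc n) a = cd_glue (2 ^ n) (cd_conj n (cd_lo (2 ^ n) a)) (\<lambda>i. - cd_hi (2 ^ n) a i)"

fun cd_mult :: "nat \<Rightarrow> (nat \<Rightarrow> real) \<Rightarrow> (nat \<Rightarrow> real) \<Rightarrow> nat \<Rightarrow> real" where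
  "cd_mult 0 x y = (\<lambda>i. if i = 0 then x 0 * y 0 else 0)"
| "cd_mult (Suc n) x y =
     (let h = 2 ^ n; a = cd_lo h x; b = cd_hi h x; c = cd_lo h y; d = cd_hi h y in
      cd_glue h (\<lambda>i. cd_mult n a c i - cd_mult n (cd_conj n d) b i)
                (\<lambda>i. cd_mult n d a i + cd_mult n b (cd_conj n c) i))"

section \<open>Points: matrices with entries in a Cayley--Dickson algebra\<close>

type_synonym pt = "nat \<Rightarrow> nat \<Rightarrow> nat \<Rightarrow> real"

definition mat_mult :: "nat \<Rightarrow> nat \<Rightarrow> pt \<Rightarrow> pt \<Rightarrow> pt" where
  "mat_mult n N X Y = (\<lambda>i j l. \<Sum>k<N. cd_mult n (X i k) (Y k j) l)"

text \<open>Projective space P^m over the level-n algebra: trace-one idempotent Hermitian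
  (m+1)x(m+1) matrices (for octonions, m = 2: primitive idempotents of the Albert algebra).\<close>
definition proj_pts :: "nat \<Rightarrow> nat \<Rightarrow> pt set" where
  "proj_pts n m = {X. (\<forall>i j l. (m < i \<or> m < j \<or> 2 ^ n \<le> l) \<longrightarrow> X i j l = 0)
      \<and> (\<forall>i\<le>m. \<forall>j\<le>m. X j i = cd_conj n (X i j))
      \<and> mat_mult n (Suc m) X X = X
      \<and> (\<Sum>i\<le>m. X i i 0) = 1}"

text \<open>cos(|XY|/2) = 2 Re tr(XY) - 1 (= cos of twice the Fubini--Study angle).\<close>
definition proj_cos :: "nat \<Rightarrow> nat \<Rightarrow> pt \<Rightarrow> pt \<Rightarrow> real" where
  "proj_cos n m X Y = 2 * (\<Sum>i\<le>m. mat_mult n (Suc m) X Y i i 0) - 1"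

text \<open>Unit sphere S^d in R^(d+1), coordinates stored in the entries p i 0 0.\<close>
definition sph_pts :: "nat \<Rightarrow> pt set" where
  "sph_pts d = {p. (\<forall>i j l. (j \<noteq> 0 \<or> l \<noteq> 0 \<or> d < i) \<longrightarrow> p i j l = 0)
      \<and> (\<Sum>i\<le>d. (p i 0 0)\<^sup>2) = 1}"

definition sph_cos :: "nat \<Rightarrow> pt \<Rightarrow> pt \<Rightarrow> real" where
  "sph_cos d p q = (\<Sum>i\<le>d. p i 0 0 * q i 0 0)"

text \<open>The nat argument is the (real) dimension d.\<close>
datatype tph = Sph nat | RealP nat | CplxP nat | QuatP nat | CayP

fun tph_valid :: "tph \<Rightarrow> bool" where
  "tph_valid (Sph d) = (1 \<le> d)"
| "tph_valid (RealP d) = (2 \<le> d)"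
| "tph_valid (CplxP d) = (even d \<and> 4 \<le> d)"
| "tph_valid (QuatP d) = (4 dvd d \<and> 8 \<le> d)"
| "tph_valid CayP = True"

fun tph_dim :: "tph \<Rightarrow> nat" where
  "tph_dim (Sph d) = d" | "tph_dim (RealP d) = d" | "tph_dim (CplxP d) = d"
| "tph_dim (QuatP d) = d" | "tph_dim CayP = 16"

fun tph_beta :: "tph \<Rightarrow> real" where
  "tph_beta (Sph d) = (real d - 2) / 2" | "tph_beta (RealP d) = - 1 / 2"
| "tph_beta (CplxP d) = 0" | "tph_beta (QuatP d) = 1" | "tph_beta CayP = 3"

definition tph_alpha :: "tph \<Rightarrow> real" where
  "tph_alpha M = (real (tph_dim M) - 2) / 2"

fun tph_pts :: "tph \<Rightarrow> pt set" where
  "tph_pts (Sph d) = sph_pts d"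
| "tph_pts (RealP d) = proj_pts 0 d"
| "tph_pts (CplxP d) = proj_pts 1 (d div 2)"
| "tph_pts (QuatP d) = proj_pts 2 (d div 4)"
| "tph_pts CayP = proj_pts 3 2"

text \<open>tph_cos M x y = cos(|xy|/2), geodesics normalized to length 2 pi.\<close>
fun tph_cos :: "tph \<Rightarrow> pt \<Rightarrow> pt \<Rightarrow> real" where
  "tph_cos (Sph d) = sph_cos d"
| "tph_cos (RealP d) = proj_cos 0 d"
| "tph_cos (CplxP d) = proj_cos 1 (d div 2)"
| "tph_cos (QuatP d) = proj_cos 2 (d div 4)"
| "tph_cos CayP = proj_cos 3 2"

definition pos_def_kernel :: "'a set \<Rightarrow> ('a \<Rightarrow> 'a \<Rightarrow> real) \<Rightarrow> bool" where
  "pos_def_kernel X K \<longleftrightarrow>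
     (\<forall>p\<in>X. \<forall>q\<in>X. K p q = K q p) \<and>
     (\<forall>(n::nat) (p::nat \<Rightarrow> 'a) (c::nat \<Rightarrow> real).
        (\<forall>i<n. p i \<in> X) \<longrightarrow> inj_on p {..<n} \<longrightarrow>
        0 \<le> (\<Sum>i<n. \<Sum>j<n. c i * c j * K (p i) (p j)))"

end

theory Submission
  imports Defs
begin

text \<open>If \<open>\<bar>Ki\<bar> \<le> B\<close> and \<open>P\<^sub>k\<^sup>2 \<le> E\<^sub>k h\<^sub>k\<close> on \<open>[-1, 1]\<close>, then
  \<open>\<bar>a\<^sub>k\<^sub>,\<^sub>l P\<^sub>k(1) P\<^sub>l(1)\<bar> \<le> B E\<^sub>k E'\<^sub>l\<close> times the masses of the two Jacobi weights.
  Since \<open>P\<^sub>k(cos \<theta>)\<close> is a cosine polynomial of degree \<open>k\<close>, a Nikolskii-type inequality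
  (sup norm against the \<open>L\<^sup>2\<close> norm on \<open>[\<delta>, \<pi> - \<delta>]\<close>, where the Jacobi weight is bounded
  below) gives \<open>E\<^sub>k = O((k + 1)\<^sup>N)\<close>. The double series is therefore dominated by the product of
  two convergent series \<open>\<Sum> (k + 1)\<^sup>N \<bar>r\<bar>\<^sup>k\<close>.\<close>

section \<open>Curves realising every cosine of half the distance\<close>

definition cd_real :: "real \<Rightarrow> nat \<Rightarrow> real" where
  "cd_real x = (\<lambda>i. if i = 0 then x else 0)"

lemma cd_lo_real: "0 < h \<Longrightarrow> cd_lo h (cd_real x) = cd_real x"
  and cd_hi_real: "0 < h \<Longrightarrow> cd_hi h (cd_real x) = cd_real 0"
  by (auto simp: cd_lo_def cd_hi_def cd_real_def)

lemma cd_conj_real: "cd_conj n (cd_real x) = cd_real x"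
proof (induction n arbitrary: x)
  case 0
  show ?case by (auto simp: cd_real_def)
next
  case (Suc n)
  have "cd_conj (Suc n) (cd_real x) = cd_glue (2 ^ n) (cd_real x) (\<lambda>i. - cd_real 0 i)"
    by (simp add: Suc cd_lo_real cd_hi_real)
  also have "\<dots> = cd_real x" by (auto simp: cd_glue_def cd_real_def)
  finally show ?case .
qed

lemma cd_mult_real: "cd_mult n (cd_real x) (cd_real y) = cd_real (x * y)"
proof (induction n arbitrary: x y)
  case 0
  show ?case by (auto simp: cd_real_def)
next
  case (Suc n)
  have "cd_mult (Suc n) (cd_real x) (cd_real y)
      = cd_glue (2 ^ n) (\<lambda>i. cd_real (x * y) i - cd_real (0 * 0) i)
          (\<lambda>i. cd_real (0 * x) i + cd_real (0 * y) i)"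
    by (simp add: Suc Let_def cd_lo_real cd_hi_real cd_conj_real)
  also have "\<dots> = cd_real (x * y)" by (auto simp: cd_glue_def cd_real_def)
  finally show ?case .
qed

lemma sum_cd_real: "(\<Sum>k\<in>K. cd_real (f k) l) = cd_real (\<Sum>k\<in>K. f k) l"
  by (simp add: cd_real_def)

lemma mat_mult_real:
  "mat_mult n N (\<lambda>i j. cd_real (A i j)) (\<lambda>i j. cd_real (B i j))
     = (\<lambda>i j. cd_real (\<Sum>k<N. A i k * B k j))"
  by (simp add: mat_mult_def cd_mult_real sum_cd_real)

lemma continuous_on_if_const: "continuous_on S f \<Longrightarrow> continuous_on S (\<lambda>t. if P then f t else 0)"
  by (cases P) simp_all

definition plane_vec :: "real \<Rightarrow> real \<Rightarrow> nat \<Rightarrow> real" where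
  "plane_vec c s i = (if i = 0 then c else if i = 1 then s else 0)"

lemma plane_vec_simps [simp]: "plane_vec c s 0 = c" "plane_vec c s (Suc 0) = s"
  by (simp_all add: plane_vec_def)

lemma sum_plane_vec:
  assumes "1 \<le> m"
  shows "(\<Sum>k\<le>m. plane_vec c s k * f k) = c * f 0 + s * f 1"
proof -
  have "(\<Sum>k\<le>m. plane_vec c s k * f k) = (\<Sum>k\<in>{0, 1}. plane_vec c s k * f k)"
    using assms by (intro sum.mono_neutral_right) (auto simp: plane_vec_def)
  then show ?thesis by simp
qed

lemma continuous_on_plane_vec:
  "continuous_on S f \<Longrightarrow> continuous_on S g \<Longrightarrow> continuous_on S (\<lambda>t. plane_vec (f t) (g t) i)"
  by (cases "i = 0"; cases "i = 1") (simp_all add: plane_vec_def)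

definition line_proj :: "real \<Rightarrow> real \<Rightarrow> pt" where
  "line_proj c s = (\<lambda>i j. cd_real (plane_vec c s i * plane_vec c s j))"

lemma line_proj_in_proj_pts:
  assumes "1 \<le> m" "c\<^sup>2 + s\<^sup>2 = 1"
  shows "line_proj c s \<in> proj_pts n m"
  unfolding proj_pts_def
proof (intro CollectI conjI allI impI ballI)
  fix i j l :: nat
  assume "m < i \<or> m < j \<or> 2 ^ n \<le> l"
  moreover have "(1::nat) \<le> 2 ^ n" by simp
  ultimately show "line_proj c s i j l = 0"
    using assms(1) by (auto simp: line_proj_def cd_real_def plane_vec_def)
next
  fix i j
  show "line_proj c s j i = cd_conj n (line_proj c s i j)"
    by (simp add: line_proj_def cd_conj_real mult.commute)
next
  have "(\<Sum>k\<le>m. plane_vec c s i * plane_vec c s k * (plane_vec c s k * plane_vec c s j))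
      = plane_vec c s i * plane_vec c s j * (c\<^sup>2 + s\<^sup>2)" for i j
    using sum_plane_vec[OF assms(1), of c s "\<lambda>k. plane_vec c s i * (plane_vec c s k * plane_vec c s j)"]
    by (simp add: algebra_simps power2_eq_square)
  then show "mat_mult n (Suc m) (line_proj c s) (line_proj c s) = line_proj c s"
    using assms(2) by (simp add: line_proj_def mat_mult_real lessThan_Suc_atMost)
next
  show "(\<Sum>i\<le>m. line_proj c s i i 0) = 1"
    using sum_plane_vec[OF assms(1), of c s "plane_vec c s"] assms(2)
    by (simp add: line_proj_def cd_real_def power2_eq_square)
qed

lemma proj_cos_line_proj:
  assumes "1 \<le> m"
  shows "proj_cos n m (line_proj 1 0) (line_proj c s) = 2 * c\<^sup>2 - 1"
proof -
  have "(\<Sum>i\<le>m. mat_mult n (Suc m) (line_proj 1 0) (line_proj c s) i i 0)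
      = (\<Sum>i\<le>m. plane_vec 1 0 i * (\<Sum>k\<le>m. plane_vec 1 0 k * (plane_vec c s k * plane_vec c s i)))"
    unfolding line_proj_def mat_mult_real
    by (simp add: cd_real_def sum_distrib_left algebra_simps lessThan_Suc_atMost)
  also have "\<dots> = c\<^sup>2"
    by (simp add: sum_plane_vec[OF assms] power2_eq_square)
  finally show ?thesis by (simp add: proj_cos_def)
qed

definition has_cos_path :: "pt set \<Rightarrow> (pt \<Rightarrow> pt \<Rightarrow> real) \<Rightarrow> bool" where
  "has_cos_path X cs \<longleftrightarrow> (\<exists>e y. e \<in> X \<and> continuous_on {-1..1} y \<and>
     (\<forall>t\<in>{-1..1}. y t \<in> X \<and> cs e (y t) = t))"

lemma proj_has_cos_path:
  assumes "1 \<le> m"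
  shows "has_cos_path (proj_pts n m) (proj_cos n m)"
  unfolding has_cos_path_def
proof (intro exI conjI ballI)
  show "line_proj 1 0 \<in> proj_pts n m" by (rule line_proj_in_proj_pts[OF assms]) simp
  show "continuous_on {-1..1} (\<lambda>t. line_proj (cos (arccos t / 2)) (sin (arccos t / 2)))"
    unfolding line_proj_def cd_real_def
    by (intro continuous_on_coordinatewise_then_product continuous_on_if_const continuous_intros
        continuous_on_plane_vec continuous_on_arccos') auto
  fix t :: real
  assume t: "t \<in> {-1..1}"
  show "line_proj (cos (arccos t / 2)) (sin (arccos t / 2)) \<in> proj_pts n m"
    by (rule line_proj_in_proj_pts[OF assms]) simp
  have "2 * (cos (arccos t / 2))\<^sup>2 - 1 = cos (arccos t)"
    using cos_double_cos[of "arccos t / 2"] by simp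
  then show "proj_cos n m (line_proj 1 0) (line_proj (cos (arccos t / 2)) (sin (arccos t / 2))) = t"
    using t by (simp add: proj_cos_line_proj[OF assms])
qed

definition sph_point :: "real \<Rightarrow> real \<Rightarrow> pt" where
  "sph_point c s = (\<lambda>i j l. if j = 0 \<and> l = 0 then plane_vec c s i else 0)"

lemma sph_point_in_sph_pts:
  assumes "1 \<le> d" "c\<^sup>2 + s\<^sup>2 = 1"
  shows "sph_point c s \<in> sph_pts d"
  using assms sum_plane_vec[OF assms(1), of c s "plane_vec c s"]
  by (auto simp: sph_pts_def sph_point_def plane_vec_def power2_eq_square)

lemma sph_has_cos_path:
  assumes "1 \<le> d"
  shows "has_cos_path (sph_pts d) (sph_cos d)"
  unfolding has_cos_path_def
proof (intro exI conjI ballI)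
  show "sph_point 1 0 \<in> sph_pts d" by (rule sph_point_in_sph_pts[OF assms]) simp
  show "continuous_on {-1..1} (\<lambda>t. sph_point t (sqrt (1 - t\<^sup>2)))"
    unfolding sph_point_def
    by (intro continuous_on_coordinatewise_then_product continuous_on_if_const continuous_intros
        continuous_on_plane_vec)
  fix t :: real
  assume "t \<in> {-1..1}"
  then have "t\<^sup>2 \<le> 1" by (auto simp: abs_square_le_1)
  then show "sph_point t (sqrt (1 - t\<^sup>2)) \<in> sph_pts d"
    by (intro sph_point_in_sph_pts[OF assms]) simp
  show "sph_cos d (sph_point 1 0) (sph_point t (sqrt (1 - t\<^sup>2))) = t"
    by (simp add: sph_cos_def sph_point_def sum_plane_vec[OF assms])
qed

lemma tph_has_cos_path: "tph_valid M \<Longrightarrow> has_cos_path (tph_pts M) (tph_cos M)"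
  by (cases M) (auto intro: sph_has_cos_path proj_has_cos_path)

lemma tph_alpha_beta_gt:
  assumes "tph_valid M"
  shows "-1 < tph_alpha M" "-1 < tph_beta M"
  using assms by (cases M; simp add: tph_alpha_def)+

lemma isotropic_part_bounded:
  fixes K :: "pt \<times> pt \<Rightarrow> pt \<times> pt \<Rightarrow> real" and Ki :: "real \<Rightarrow> real \<Rightarrow> real"
  assumes paths: "has_cos_path X cX" "has_cos_path Y cY"
    and K_cont: "continuous_on ((X \<times> Y) \<times> (X \<times> Y)) (\<lambda>(p, q). K p q)"
    and K_iso: "\<forall>x\<in>X. \<forall>y\<in>X. \<forall>w\<in>Y. \<forall>z\<in>Y. K (x, w) (y, z) = Ki (cX x y) (cY w z)"
  obtains B where "\<And>t s. t \<in> {-1..1} \<Longrightarrow> s \<in> {-1..1} \<Longrightarrow> \<bar>Ki t s\<bar> \<le> B"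
proof -
  obtain e y where e: "e \<in> X" and y_cont: "continuous_on {-1..1} y"
    and y: "\<And>t. t \<in> {-1..1} \<Longrightarrow> y t \<in> X \<and> cX e (y t) = t"
    using paths(1) unfolding has_cos_path_def by blast
  obtain e' z where e': "e' \<in> Y" and z_cont: "continuous_on {-1..1} z"
    and z: "\<And>s. s \<in> {-1..1} \<Longrightarrow> z s \<in> Y \<and> cY e' (z s) = s"
    using paths(2) unfolding has_cos_path_def by blast
  define Q where "Q = ({-1..1} \<times> {-1..1} :: (real \<times> real) set)"
  define \<Phi> where "\<Phi> = (\<lambda>p::real \<times> real. ((e, e'), (y (fst p), z (snd p))))"
  have "continuous_on Q \<Phi>"
    unfolding \<Phi>_def Q_def
    by (intro continuous_intros continuous_on_compose2[OF y_cont] continuous_on_compose2[OF z_cont])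
      auto
  moreover have "\<Phi> ` Q \<subseteq> (X \<times> Y) \<times> (X \<times> Y)"
    using e e' y z by (auto simp: \<Phi>_def Q_def)
  ultimately have "continuous_on Q ((\<lambda>(p, q). K p q) \<circ> \<Phi>)"
    by (intro continuous_on_compose continuous_on_subset[OF K_cont])
  then have "bounded (((\<lambda>(p, q). K p q) \<circ> \<Phi>) ` Q)"
    by (intro compact_imp_bounded compact_continuous_image) (auto simp: Q_def intro: compact_Times)
  then obtain B where B: "\<And>p. p \<in> Q \<Longrightarrow> \<bar>K (e, e') (y (fst p), z (snd p))\<bar> \<le> B"
    by (auto simp: bounded_iff \<Phi>_def)
  show ?thesis
  proof (rule that)
    fix t s :: real
    assume "t \<in> {-1..1}" "s \<in> {-1..1}"
    then show "\<bar>Ki t s\<bar> \<le> B"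
      using B[of "(t, s)"] K_iso e e' y z by (auto simp: Q_def)
  qed
qed

section \<open>Cosine polynomials and a Nikolskii-type inequality\<close>

definition cos_poly :: "nat \<Rightarrow> (real \<Rightarrow> real) \<Rightarrow> bool" where
  "cos_poly n g \<longleftrightarrow> (\<exists>c. \<forall>x. g x = (\<Sum>j\<le>n. c j * cos (real j * x)))"

lemma cos_poly_continuous_on: "cos_poly n g \<Longrightarrow> continuous_on S g"
proof -
  assume "cos_poly n g"
  then obtain c where "g = (\<lambda>x. \<Sum>j\<le>n. c j * cos (real j * x))"
    unfolding cos_poly_def by blast
  then show ?thesis by (simp add: continuous_intros)
qed

lemma cos_poly_mono: "cos_poly n g \<Longrightarrow> n \<le> m \<Longrightarrow> cos_poly m g"
proof -
  assume "cos_poly n g" "n \<le> m"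
  then obtain c where c: "\<And>x. g x = (\<Sum>j\<le>n. c j * cos (real j * x))"
    unfolding cos_poly_def by blast
  have "g x = (\<Sum>j\<le>m. (if j \<le> n then c j else 0) * cos (real j * x))" for x
    unfolding c using \<open>n \<le> m\<close> by (intro sum.mono_neutral_cong_left) auto
  then show ?thesis unfolding cos_poly_def by (intro exI[of _ "\<lambda>j. if j \<le> n then c j else 0"]) blast
qed

lemma cos_poly_const: "cos_poly 0 (\<lambda>x. a)"
  unfolding cos_poly_def by (rule exI[of _ "\<lambda>j. a"]) simp

lemma cos_poly_cos_nat: "cos_poly j (\<lambda>x. cos (real j * x))"
proof -
  have "cos (real j * x) = (\<Sum>i\<le>j. (if i = j then 1 else 0) * cos (real i * x))" for x
    by (simp add: if_distrib[of "\<lambda>c. c * _"] cong: if_cong)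
  then show ?thesis unfolding cos_poly_def by (intro exI[of _ "\<lambda>i. if i = j then 1 else 0"]) blast
qed

lemma cos_poly_add: "cos_poly n f \<Longrightarrow> cos_poly n g \<Longrightarrow> cos_poly n (\<lambda>x. f x + g x)"
proof -
  assume "cos_poly n f" "cos_poly n g"
  then obtain c d where "\<And>x. f x = (\<Sum>j\<le>n. c j * cos (real j * x))"
    and "\<And>x. g x = (\<Sum>j\<le>n. d j * cos (real j * x))"
    unfolding cos_poly_def by blast
  then show ?thesis unfolding cos_poly_def
    by (intro exI[of _ "\<lambda>j. c j + d j"]) (simp add: distrib_right sum.distrib)
qed

lemma cos_poly_cmult: "cos_poly n f \<Longrightarrow> cos_poly n (\<lambda>x. a * f x)"
proof -
  assume "cos_poly n f"
  then obtain c where "\<And>x. f x = (\<Sum>j\<le>n. c j * cos (real j * x))"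
    unfolding cos_poly_def by blast
  then show ?thesis unfolding cos_poly_def
    by (intro exI[of _ "\<lambda>j. a * c j"]) (simp add: sum_distrib_left mult.assoc)
qed

lemma cos_poly_sum: "finite A \<Longrightarrow> (\<And>i. i \<in> A \<Longrightarrow> cos_poly n (f i)) \<Longrightarrow> cos_poly n (\<lambda>x. \<Sum>i\<in>A. f i x)"
  by (induction A rule: finite_induct)
    (auto intro: cos_poly_add cos_poly_mono[OF cos_poly_const])

lemma cos_poly_cos_mult_cos_nat: "cos_poly (Suc j) (\<lambda>x. cos x * cos (real j * x))"
proof (cases j)
  case 0
  then show ?thesis using cos_poly_cos_nat[of 1] by simp
next
  case (Suc i)
  have product_to_sum:
    "cos x * cos (real j * x) = 1/2 * cos (real i * x) + 1/2 * cos (real (Suc j) * x)" for x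
  proof -
    have "x - real j * x = - (real i * x)" "x + real j * x = real (Suc j) * x"
      using Suc by (simp_all add: algebra_simps)
    then show ?thesis by (simp add: cos_times_cos)
  qed
  show ?thesis
    unfolding product_to_sum
    by (intro cos_poly_add cos_poly_cmult cos_poly_cos_nat cos_poly_mono[OF cos_poly_cos_nat])
      (use Suc in auto)
qed

lemma cos_poly_cos_mult: "cos_poly n g \<Longrightarrow> cos_poly (Suc n) (\<lambda>x. cos x * g x)"
proof -
  assume "cos_poly n g"
  then obtain c where c: "\<And>x. g x = (\<Sum>j\<le>n. c j * cos (real j * x))"
    unfolding cos_poly_def by blast
  have expand: "cos x * g x = (\<Sum>j\<le>n. c j * (cos x * cos (real j * x)))" for x
    unfolding c by (simp add: sum_distrib_left algebra_simps)
  show ?thesis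
    unfolding expand
    by (intro cos_poly_sum cos_poly_cmult cos_poly_mono[OF cos_poly_cos_mult_cos_nat]) auto
qed

lemma cos_poly_affine_power_mult:
  "cos_poly n g \<Longrightarrow> cos_poly (n + m) (\<lambda>x. (a + b * cos x) ^ m * g x)"
proof (induction m)
  case 0
  then show ?case by simp
next
  case (Suc m)
  have expand: "(a + b * cos x) ^ Suc m * g x
      = a * ((a + b * cos x) ^ m * g x) + b * (cos x * ((a + b * cos x) ^ m * g x))" for x
    by (simp add: algebra_simps)
  have IH: "cos_poly (n + m) (\<lambda>x. (a + b * cos x) ^ m * g x)"
    using Suc by blast
  show ?case
    unfolding expand
    by (intro cos_poly_add cos_poly_cmult) (auto intro: cos_poly_mono[OF IH] cos_poly_cos_mult[OF IH])
qed

lemma jacobi_cos_poly: "cos_poly k (\<lambda>x. jacobi k a b (cos x))"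
proof -
  have expand: "jacobi k a b (cos x) = (\<Sum>s\<le>k. ((real k + a) gchoose (k - s)) * ((real k + b) gchoose s) *
      ((-1/2 + 1/2 * cos x) ^ s * ((1/2 + 1/2 * cos x) ^ (k - s) * 1)))" for x
    unfolding jacobi_def by (intro sum.cong) (auto simp: field_simps)
  have "cos_poly k (\<lambda>x. (-1/2 + 1/2 * cos x) ^ s * ((1/2 + 1/2 * cos x) ^ (k - s) * 1))"
    if "s \<le> k" for s
  proof -
    have "cos_poly ((0 + (k - s)) + s)
        (\<lambda>x. (-1/2 + 1/2 * cos x) ^ s * ((1/2 + 1/2 * cos x) ^ (k - s) * 1))"
      by (intro cos_poly_affine_power_mult cos_poly_const)
    then show ?thesis using that by simp
  qed
  then show ?thesis
    unfolding expand by (intro cos_poly_sum cos_poly_cmult) auto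
qed

lemma integral_cos_nat_mult:
  "integral {0..pi} (\<lambda>x. cos (real m * x)) = (if m = 0 then pi else 0)"
proof (cases "m = 0")
  case False
  have "((\<lambda>x. cos (real m * x)) has_integral (sin (real m * pi) / real m - sin (real m * 0) / real m)) {0..pi}"
  proof (rule fundamental_theorem_of_calculus)
    fix x assume "x \<in> {0..pi}"
    show "((\<lambda>x. sin (real m * x) / real m) has_vector_derivative cos (real m * x)) (at x within {0..pi})"
      using False
      by (auto intro!: derivative_eq_intros simp: has_real_derivative_iff_has_vector_derivative[symmetric])
  qed simp
  then show ?thesis using False by (simp add: integral_unique sin_npi)
qed simp

lemma integral_cos_mult_cos:
  "integral {0..pi} (\<lambda>x. cos (real j * x) * cos (real k * x)) =
     (if j = k then (if j = 0 then pi else pi / 2) else 0)"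
proof -
  define d where "d = (if k \<le> j then j - k else k - j)"
  have product_to_sum:
    "cos (real j * x) * cos (real k * x) = cos (real d * x) / 2 + cos (real (j + k) * x) / 2" for x
  proof -
    have "cos (real j * x - real k * x) = cos (real d * x)"
    proof (cases "k \<le> j")
      case True
      then show ?thesis by (simp add: d_def of_nat_diff left_diff_distrib)
    next
      case False
      then have "real j * x - real k * x = - (real d * x)" by (simp add: d_def of_nat_diff algebra_simps)
      then show ?thesis by simp
    qed
    then show ?thesis by (simp add: cos_times_cos distrib_right add_divide_distrib)
  qed
  have "integral {0..pi} (\<lambda>x. cos (real j * x) * cos (real k * x))
      = integral {0..pi} (\<lambda>x. cos (real d * x)) / 2 + integral {0..pi} (\<lambda>x. cos (real (j + k) * x)) / 2"
    unfolding product_to_sum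
    by (subst integral_add) (auto intro!: integrable_continuous_interval continuous_intros)
  also have "\<dots> = (if j = k then (if j = 0 then pi else pi / 2) else 0)"
    unfolding integral_cos_nat_mult by (auto simp: d_def)
  finally show ?thesis .
qed

lemma integral_cos_sum_sq_ge:
  assumes g: "\<And>x. g x = (\<Sum>j\<le>n. c j * cos (real j * x))"
  shows "pi / 2 * (\<Sum>j\<le>n. (c j)\<^sup>2) \<le> integral {0..pi} (\<lambda>x. (g x)\<^sup>2)"
proof -
  have sq: "(g x)\<^sup>2 = (\<Sum>j\<le>n. \<Sum>k\<le>n. c j * c k * (cos (real j * x) * cos (real k * x)))" for x
    unfolding g power2_eq_square sum_product by (simp add: algebra_simps)
  have int: "(\<lambda>x. c j * c k * (cos (real j * x) * cos (real k * x))) integrable_on {0..pi}" for j k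
    by (auto intro!: integrable_continuous_interval continuous_intros)
  have "integral {0..pi} (\<lambda>x. (g x)\<^sup>2)
      = (\<Sum>j\<le>n. \<Sum>k\<le>n. c j * c k * integral {0..pi} (\<lambda>x. cos (real j * x) * cos (real k * x)))"
    unfolding sq by (simp add: integral_sum integrable_sum int)
  also have "\<dots> = (\<Sum>j\<le>n. (c j)\<^sup>2 * (if j = 0 then pi else pi / 2))"
    by (simp add: integral_cos_mult_cos if_distrib[of "\<lambda>x. _ * x"] power2_eq_square
        cong: if_cong)
  also have "\<dots> \<ge> (\<Sum>j\<le>n. (c j)\<^sup>2 * (pi / 2))"
    by (intro sum_mono mult_left_mono) auto
  moreover have "(\<Sum>j\<le>n. (c j)\<^sup>2 * (pi / 2)) = pi / 2 * (\<Sum>j\<le>n. (c j)\<^sup>2)"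
    by (simp add: sum_distrib_left mult.commute)
  ultimately show ?thesis by linarith
qed

lemma cos_poly_sq_le_integral:
  assumes "cos_poly n g"
  shows "(g x)\<^sup>2 \<le> 2 * (real n + 1) / pi * integral {0..pi} (\<lambda>x. (g x)\<^sup>2)"
proof -
  obtain c where g: "\<And>x. g x = (\<Sum>j\<le>n. c j * cos (real j * x))"
    using assms unfolding cos_poly_def by blast
  have "(g x)\<^sup>2 \<le> (\<Sum>j\<le>n. (c j * cos (real j * x))\<^sup>2) * real (card {..n})"
    unfolding g by (rule sum_squared_le_sum_of_squares)
  also have "\<dots> \<le> (\<Sum>j\<le>n. (c j)\<^sup>2) * (real n + 1)"
  proof -
    have "(c j * cos (real j * x))\<^sup>2 \<le> (c j)\<^sup>2" for j
      using abs_square_le_1[of "cos (real j * x)"]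
      by (simp add: power_mult_distrib mult_left_le)
    then show ?thesis by (intro mult_mono sum_mono) (auto intro: sum_nonneg)
  qed
  also have "\<dots> = 2 * (real n + 1) / pi * (pi / 2 * (\<Sum>j\<le>n. (c j)\<^sup>2))"
    by (simp add: field_simps)
  also have "\<dots> \<le> 2 * (real n + 1) / pi * integral {0..pi} (\<lambda>x. (g x)\<^sup>2)"
    by (intro mult_left_mono integral_cos_sum_sq_ge[OF g]) auto
  finally show ?thesis .
qed

text \<open>The sup bound just proved shows that the two end intervals of length \<open>\<delta>\<close> carry at most
  half of the \<open>L\<^sup>2\<close> mass.\<close>
lemma cos_poly_integral_sq_le_middle:
  assumes g: "cos_poly n g" and \<delta>: "0 < \<delta>" "\<delta> \<le> pi / (8 * (real n + 1))"
  shows "integral {0..pi} (\<lambda>x. (g x)\<^sup>2) \<le> 2 * integral {\<delta>..pi-\<delta>} (\<lambda>x. (g x)\<^sup>2)"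
proof -
  define S where "S = integral {0..pi} (\<lambda>x. (g x)\<^sup>2)"
  define M where "M = 2 * (real n + 1) / pi * S"
  have gM: "(g x)\<^sup>2 \<le> M" for x
    unfolding M_def S_def by (rule cos_poly_sq_le_integral[OF g])
  have int: "(\<lambda>x. (g x)\<^sup>2) integrable_on {u..v}" for u v
    by (intro integrable_continuous_interval continuous_intros cos_poly_continuous_on[OF g])
  have "pi / (8 * (real n + 1)) \<le> pi / 8"
    by (intro divide_left_mono) auto
  with \<delta>(2) have \<delta>_small: "\<delta> \<le> pi / 8" by linarith
  have end_le: "integral {u..u+\<delta>} (\<lambda>x. (g x)\<^sup>2) \<le> \<delta> * M" for u
  proof -
    have "integral {u..u+\<delta>} (\<lambda>x. (g x)\<^sup>2) \<le> integral {u..u+\<delta>} (\<lambda>x. M)"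
      by (intro integral_le int gM) auto
    then show ?thesis using \<delta>(1) by simp
  qed
  have "S = integral {0..\<delta>} (\<lambda>x. (g x)\<^sup>2) + integral {\<delta>..pi-\<delta>} (\<lambda>x. (g x)\<^sup>2)
          + integral {pi-\<delta>..pi} (\<lambda>x. (g x)\<^sup>2)"
    unfolding S_def using \<delta>(1) \<delta>_small
    by (simp add: Henstock_Kurzweil_Integration.integral_combine int)
  also have "\<dots> \<le> 2 * \<delta> * M + integral {\<delta>..pi-\<delta>} (\<lambda>x. (g x)\<^sup>2)"
    using end_le[of 0] end_le[of "pi - \<delta>"] by simp
  also have "2 * \<delta> * M \<le> S / 2"
  proof -
    have "0 \<le> S" unfolding S_def by (intro integral_nonneg int) auto
    then have "2 * \<delta> * M \<le> 2 * (pi / (8 * (real n + 1))) * M"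
      using \<delta>(2) by (intro mult_right_mono mult_left_mono) (auto simp: M_def)
    also have "\<dots> = S / 2"
    proof -
      have "pi * (real n + 1) \<noteq> 0" by simp
      then show ?thesis by (simp add: M_def field_simps)
    qed
    finally show ?thesis .
  qed
  finally show ?thesis unfolding S_def by simp
qed

lemma cos_poly_sq_le_weighted_integral:
  assumes g: "cos_poly n g" and \<delta>: "0 < \<delta>" "\<delta> \<le> pi / (8 * (real n + 1))"
    and \<omega>: "continuous_on {\<delta>..pi-\<delta>} \<omega>" and m: "0 < m" "\<And>x. x \<in> {\<delta>..pi-\<delta>} \<Longrightarrow> m \<le> \<omega> x"
  shows "(g x)\<^sup>2 \<le> 4 * (real n + 1) / (pi * m) * integral {\<delta>..pi-\<delta>} (\<lambda>x. (g x)\<^sup>2 * \<omega> x)"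
proof -
  have gc: "continuous_on {\<delta>..pi-\<delta>} g" by (rule cos_poly_continuous_on[OF g])
  have "integral {\<delta>..pi-\<delta>} (\<lambda>x. (g x)\<^sup>2) \<le> integral {\<delta>..pi-\<delta>} (\<lambda>x. (g x)\<^sup>2 * \<omega> x / m)"
  proof (rule integral_le)
    fix x assume "x \<in> {\<delta>..pi-\<delta>}"
    then have "(g x)\<^sup>2 * 1 \<le> (g x)\<^sup>2 * (\<omega> x / m)"
      using m by (intro mult_left_mono) (auto simp: field_simps)
    then show "(g x)\<^sup>2 \<le> (g x)\<^sup>2 * \<omega> x / m" by simp
  qed (use m in \<open>auto intro!: integrable_continuous_interval continuous_intros gc \<omega>\<close>)
  then have "integral {0..pi} (\<lambda>x. (g x)\<^sup>2) \<le> 2 * (integral {\<delta>..pi-\<delta>} (\<lambda>x. (g x)\<^sup>2 * \<omega> x) / m)"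
    using cos_poly_integral_sq_le_middle[OF g \<delta>] by (simp add: integral_divide)
  then have "2 * (real n + 1) / pi * integral {0..pi} (\<lambda>x. (g x)\<^sup>2)
      \<le> 2 * (real n + 1) / pi * (2 * (integral {\<delta>..pi-\<delta>} (\<lambda>x. (g x)\<^sup>2 * \<omega> x) / m))"
    by (intro mult_left_mono) auto
  also have "\<dots> = 4 * (real n + 1) / (pi * m) * integral {\<delta>..pi-\<delta>} (\<lambda>x. (g x)\<^sup>2 * \<omega> x)"
    by (simp add: field_simps)
  finally show ?thesis using cos_poly_sq_le_integral[OF g, of x] by linarith
qed

section \<open>A sup-norm bound for Jacobi polynomials\<close>

lemma set_integrable_one_minus_powr:
  assumes "a > -1"
  shows "set_integrable lborel {-1..1} (\<lambda>t::real. (1 - t) powr a)"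
proof -
  have "(\<lambda>x. x powr a) integrable_on cbox 0 (2::real)"
    using integrable_on_powr_from_0[of a 2] assms by simp
  from integrable_affinity[OF this, of "-1" 1]
  have "(\<lambda>t. (1 - t) powr a) integrable_on {-1..1::real}" by simp
  then have "(\<lambda>t. (1 - t) powr a) absolutely_integrable_on {-1..1::real}"
    by (subst absolutely_integrable_on_iff_nonneg) auto
  then show ?thesis
    by (simp add: set_integrable_def integrable_completion)
qed

lemma set_integrable_one_plus_powr:
  assumes "b > -1"
  shows "set_integrable lborel {-1..1} (\<lambda>t::real. (1 + t) powr b)"
proof -
  have "(\<lambda>x. x powr b) integrable_on cbox 0 (2::real)"
    using integrable_on_powr_from_0[of b 2] assms by simp
  from integrable_affinity[OF this, of 1 1]
  have "(\<lambda>t. (1 + t) powr b) integrable_on {-1..1::real}" by (simp add: add.commute)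
  then have "(\<lambda>t. (1 + t) powr b) absolutely_integrable_on {-1..1::real}"
    by (subst absolutely_integrable_on_iff_nonneg) auto
  then show ?thesis
    by (simp add: set_integrable_def integrable_completion)
qed

definition jacobi_weight :: "real \<Rightarrow> real \<Rightarrow> real \<Rightarrow> real" where
  "jacobi_weight a b t = (1 - t) powr a * (1 + t) powr b"

lemma jacobi_weight_nonneg: "0 \<le> jacobi_weight a b t"
  by (simp add: jacobi_weight_def)

lemma set_integrable_jacobi_weight:
  assumes "a > -1" "b > -1"
  shows "set_integrable lborel {-1..1} (jacobi_weight a b)"
  unfolding jacobi_weight_def
proof (rule set_integrable_bound)
  have powr_le: "x powr c \<le> max 1 (2 powr c)" if "1 \<le> x" "x \<le> 2" for x c :: real
  proof (cases "c \<ge> 0")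
    case True
    then show ?thesis using that powr_mono2[of c x 2] by simp
  next
    case False
    then show ?thesis using that powr_mono2'[of c 1 x] by simp
  qed
  define A where "A = max 1 (2 powr a)"
  define B where "B = max 1 (2 powr b)"
  show "set_integrable lborel {-1..1} (\<lambda>t::real. B * (1 - t) powr a + A * (1 + t) powr b)"
    by (intro set_integral_add set_integrable_mult_right set_integrable_one_minus_powr
        set_integrable_one_plus_powr assms)
  have "(1 - t) powr a * (1 + t) powr b \<le> B * (1 - t) powr a + A * (1 + t) powr b"
    if "t \<in> {-1..1}" for t
  proof (cases "t \<ge> 0")
    case True
    then have "(1 + t) powr b \<le> B"
      using that powr_le[of "1 + t" b] by (simp add: B_def)
    then have "(1 - t) powr a * (1 + t) powr b \<le> B * (1 - t) powr a"
      using mult_left_mono[of _ B "(1 - t) powr a"] by (simp add: mult.commute[of "(1 - t) powr a"])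
    then show ?thesis by (simp add: A_def add_increasing2)
  next
    case False
    then have "(1 - t) powr a \<le> A"
      using that powr_le[of "1 - t" a] by (simp add: A_def)
    then have "(1 - t) powr a * (1 + t) powr b \<le> A * (1 + t) powr b"
      by (simp add: mult_right_mono)
    then show ?thesis by (simp add: B_def add_increasing)
  qed
  then show "AE t in lborel. t \<in> {-1..1} \<longrightarrow>
      norm ((1 - t) powr a * (1 + t) powr b) \<le> norm (B * (1 - t) powr a + A * (1 + t) powr b)"
    by (intro AE_I2) (auto simp: A_def B_def)
qed (simp add: set_borel_measurable_def)

lemma set_integrable_continuous_mult:
  fixes f w :: "real \<Rightarrow> real"
  assumes "continuous_on {a..b} f" "set_integrable lborel {a..b} w"
  shows "set_integrable lborel {a..b} (\<lambda>t. f t * w t)"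
proof -
  have "bounded (f ` {a..b})"
    by (intro compact_imp_bounded compact_continuous_image assms(1)) simp
  then obtain B where "\<forall>y\<in>f ` {a..b}. norm y \<le> B"
    by (auto simp: bounded_iff)
  then have B: "\<And>t. t \<in> {a..b} \<Longrightarrow> \<bar>f t\<bar> \<le> B" by auto
  show ?thesis
  proof (rule set_integrable_bound)
    show "set_integrable lborel {a..b} (\<lambda>t. B * w t)"
      using assms(2) by (rule set_integrable_mult_right)
    have "(\<lambda>t. indicator {a..b} t *\<^sub>R f t) \<in> borel_measurable lborel"
      using borel_measurable_continuous_on_indicator[OF _ assms(1)] by simp
    moreover have "(\<lambda>t. indicator {a..b} t *\<^sub>R w t) \<in> borel_measurable lborel"
      using assms(2) by (simp add: set_integrable_def borel_measurable_integrable)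
    ultimately have "(\<lambda>t. (indicator {a..b} t *\<^sub>R f t) * (indicator {a..b} t *\<^sub>R w t))
        \<in> borel_measurable lborel"
      by (rule borel_measurable_times)
    moreover have "(\<lambda>t. (indicator {a..b} t *\<^sub>R f t) * (indicator {a..b} t *\<^sub>R w t))
        = (\<lambda>t. indicator {a..b} t *\<^sub>R (f t * w t))"
      by (auto simp: indicator_def)
    ultimately show "set_borel_measurable lborel {a..b} (\<lambda>t. f t * w t)"
      by (simp add: set_borel_measurable_def)
    show "AE t in lborel. t \<in> {a..b} \<longrightarrow> norm (f t * w t) \<le> norm (B * w t)"
      using B by (intro AE_I2) (force simp: abs_mult intro!: mult_right_mono)
  qed
qed

lemma jacobi_h_nonneg: "0 \<le> jacobi_h k a b"
  unfolding jacobi_h_def set_lebesgue_integral_def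
  by (intro Bochner_Integration.integral_nonneg) (auto simp: indicator_def)

lemma jacobi_h_eq_integral:
  assumes "a > -1" "b > -1"
  shows "jacobi_h k a b = integral {-1..1} (\<lambda>t. (jacobi k a b t)\<^sup>2 * jacobi_weight a b t)"
    and "(\<lambda>t. (jacobi k a b t)\<^sup>2 * jacobi_weight a b t) integrable_on {-1..1}"
proof -
  have "set_integrable lborel {-1..1} (\<lambda>t. (jacobi k a b t)\<^sup>2 * jacobi_weight a b t)"
    by (intro set_integrable_continuous_mult set_integrable_jacobi_weight assms)
      (auto simp: jacobi_def intro!: continuous_intros)
  from set_borel_integral_eq_integral[OF this]
  show "jacobi_h k a b = integral {-1..1} (\<lambda>t. (jacobi k a b t)\<^sup>2 * jacobi_weight a b t)"
    and "(\<lambda>t. (jacobi k a b t)\<^sup>2 * jacobi_weight a b t) integrable_on {-1..1}"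
    by (simp_all add: jacobi_h_def jacobi_weight_def mult.assoc)
qed

lemma integral_cos_substitution_le:
  fixes f :: "real \<Rightarrow> real"
  assumes \<delta>: "0 \<le> \<delta>" "\<delta> \<le> pi / 2"
    and f: "continuous_on {-cos \<delta>..cos \<delta>} f" "f integrable_on {-1..1}"
      "\<And>t. t \<in> {-1..1} \<Longrightarrow> 0 \<le> f t"
  shows "integral {\<delta>..pi-\<delta>} (\<lambda>x. f (cos x) * sin x) \<le> integral {-1..1} f"
proof -
  define c where "c = cos \<delta>"
  have c: "0 \<le> c" "c \<le> 1" using \<delta> by (auto simp: c_def cos_ge_zero)
  have cos_range: "cos ` {\<delta>..pi-\<delta>} \<subseteq> {-c..c}"
  proof clarify
    fix x assume "x \<in> {\<delta>..pi-\<delta>}"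
    then show "cos x \<in> {-c..c}"
      using cos_monotone_0_pi_le[of \<delta> x] cos_monotone_0_pi_le[of x "pi - \<delta>"] \<delta>
      by (auto simp: c_def)
  qed
  have "((\<lambda>x. (- sin x) *\<^sub>R f (cos x)) has_integral
      (integral {cos \<delta>..cos (pi - \<delta>)} f - integral {cos (pi - \<delta>)..cos \<delta>} f)) {\<delta>..pi-\<delta>}"
  proof (rule has_integral_substitution_general[of "{}" _ _ _ "-c" c])
    show "continuous_on {-c..c} f" using f(1) by (simp add: c_def)
    fix x
    show "(cos has_field_derivative - sin x) (at x within {\<delta>..pi - \<delta>})"
      by (auto intro!: derivative_eq_intros)
  qed (use \<delta> cos_range in \<open>auto intro: continuous_intros\<close>)
  from has_integral_neg[OF this]
  have "((\<lambda>x. f (cos x) * sin x) has_integral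
      integral {-c..c} f - integral {c..-c} f) {\<delta>..pi-\<delta>}"
    by (simp add: c_def mult.commute)
  moreover have "integral {c..-c} f = 0"
    using c by (cases "c = 0") auto
  ultimately have "((\<lambda>x. f (cos x) * sin x) has_integral integral {-c..c} f) {\<delta>..pi-\<delta>}"
    by simp
  moreover have "integral {-c..c} f \<le> integral {-1..1} f"
  proof (rule integral_subset_le)
    show "f integrable_on {-c..c}"
      using f(1) by (intro integrable_continuous_interval) (simp add: c_def)
  qed (use c f in auto)
  ultimately show ?thesis by (simp add: integral_unique)
qed

lemma sin_ge_half:
  fixes x :: real
  assumes "0 \<le> x" "x \<le> 1"
  shows "x / 2 \<le> sin x"
proof -
  have "0 \<le> cos u - 1/2" if "0 \<le> u" "u \<le> x" for u
  proof -
    have "cos (pi / 3) \<le> cos u"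
      using that assms pi_gt3 by (intro cos_monotone_0_pi_le) auto
    then show ?thesis by (simp add: cos_60)
  qed
  then have "sin 0 - 0 / 2 \<le> sin x - x / 2"
    by (intro DERIV_nonneg_imp_nondecreasing[OF assms(1)]) (auto intro!: derivative_eq_intros)
  then show ?thesis by simp
qed

lemma half_powr_abs_le_powr:
  fixes L x a :: real
  assumes "0 < L" "L \<le> 1" "L \<le> x" "x \<le> 2"
  shows "(L / 2) powr \<bar>a\<bar> \<le> x powr a"
proof (cases "a \<ge> 0")
  case True
  then show ?thesis using assms powr_mono2[of a "L / 2" x] by simp
next
  case False
  have "(L / 2) powr (-a) \<le> (1 / 2) powr (-a)" using assms False by (intro powr_mono2) auto
  also have "\<dots> = 2 powr a" by (simp add: powr_minus_divide powr_divide)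
  also have "\<dots> \<le> x powr a" using assms False by (intro powr_mono2') auto
  finally show ?thesis using False by simp
qed

lemma cos_bounds_on_inner_interval:
  assumes "0 < \<delta>" "\<delta> \<le> 1/2" "x \<in> {\<delta>..pi-\<delta>}"
  shows "\<delta>\<^sup>2 / 8 \<le> 1 - cos x" "\<delta>\<^sup>2 / 8 \<le> 1 + cos x"
proof -
  have "(\<delta> / 4)\<^sup>2 \<le> (sin (\<delta> / 2))\<^sup>2"
    using sin_ge_half[of "\<delta> / 2"] assms by (intro power_mono) auto
  then have "\<delta>\<^sup>2 / 8 \<le> 1 - cos \<delta>"
    using cos_double_sin[of "\<delta> / 2"] by (simp add: power2_eq_square)
  moreover have "cos x \<le> cos \<delta>" "cos (pi - \<delta>) \<le> cos x"
    using assms cos_monotone_0_pi_le[of \<delta> x] cos_monotone_0_pi_le[of x "pi - \<delta>"] by auto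
  ultimately show "\<delta>\<^sup>2 / 8 \<le> 1 - cos x" "\<delta>\<^sup>2 / 8 \<le> 1 + cos x" by auto
qed

lemma jacobi_weight_ge:
  assumes \<delta>: "0 < \<delta>" "\<delta> \<le> 1/2" and x: "x \<in> {\<delta>..pi-\<delta>}"
  shows "\<delta> / 2 * (\<delta>\<^sup>2 / 16) powr (\<bar>a\<bar> + \<bar>b\<bar>) \<le> sin x * jacobi_weight a b (cos x)"
proof -
  have "\<delta> / 2 \<le> sin \<delta>" using sin_ge_half[of \<delta>] \<delta> by simp
  moreover have "sin \<delta> \<le> sin x"
  proof (cases "x \<le> pi / 2")
    case True
    then show ?thesis using x \<delta> by (intro sin_monotone_2pi_le) auto
  next
    case False
    then have "sin \<delta> \<le> sin (pi - x)" using x \<delta> by (intro sin_monotone_2pi_le) auto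
    then show ?thesis by simp
  qed
  moreover have "\<delta>\<^sup>2 / 8 \<le> 1" using power_le_one[of \<delta> 2] \<delta> by simp
  then have "(\<delta>\<^sup>2 / 16) powr \<bar>a\<bar> \<le> (1 - cos x) powr a" "(\<delta>\<^sup>2 / 16) powr \<bar>b\<bar> \<le> (1 + cos x) powr b"
    using half_powr_abs_le_powr[of "\<delta>\<^sup>2 / 8"] cos_bounds_on_inner_interval[OF \<delta> x] \<delta> by auto
  ultimately have "\<delta> / 2 * ((\<delta>\<^sup>2 / 16) powr \<bar>a\<bar> * (\<delta>\<^sup>2 / 16) powr \<bar>b\<bar>)
      \<le> sin x * ((1 - cos x) powr a * (1 + cos x) powr b)"
    using \<delta> by (intro mult_mono) auto
  then show ?thesis by (simp add: powr_add jacobi_weight_def)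
qed

lemma jacobi_sq_le_jacobi_h:
  assumes ab: "a > -1" "b > -1" and t: "t \<in> {-1..1}"
  shows "(jacobi k a b t)\<^sup>2
    \<le> 32 / pi * (real k + 1)\<^sup>2 * (256 * (real k + 1)\<^sup>2) powr (\<bar>a\<bar> + \<bar>b\<bar>) * jacobi_h k a b"
proof -
  define x where "x = real k + 1"
  define \<delta> where "\<delta> = 1 / (4 * x)"
  define m where "m = \<delta> / 2 * (\<delta>\<^sup>2 / 16) powr (\<bar>a\<bar> + \<bar>b\<bar>)"
  define g where "g = (\<lambda>x. jacobi k a b (cos x))"
  have x: "1 \<le> x" by (simp add: x_def)
  have "2 / (8 * x) \<le> pi / (8 * x)"
    using x pi_gt3 by (intro divide_right_mono) auto
  then have \<delta>: "0 < \<delta>" "\<delta> \<le> 1/2" "\<delta> \<le> pi / (8 * (real k + 1))"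
    using x by (auto simp: \<delta>_def x_def field_simps)
  have cos_bounds: "\<delta>\<^sup>2 / 8 \<le> 1 - cos y" "\<delta>\<^sup>2 / 8 \<le> 1 + cos y" if "y \<in> {\<delta>..pi-\<delta>}" for y
    using cos_bounds_on_inner_interval[OF \<delta>(1,2) that] by auto
  have \<delta>_pos: "0 < \<delta>\<^sup>2 / 8" using \<delta> by simp
  have m: "0 < m" using \<delta> by (simp add: m_def)
  have nikolskii: "(g (arccos t))\<^sup>2 \<le> 4 * (real k + 1) / (pi * m) *
      integral {\<delta>..pi-\<delta>} (\<lambda>y. (g y)\<^sup>2 * (sin y * jacobi_weight a b (cos y)))"
  proof (rule cos_poly_sq_le_weighted_integral[OF _ \<delta>(1,3)])
    show "cos_poly k g" unfolding g_def by (rule jacobi_cos_poly)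
    show "continuous_on {\<delta>..pi-\<delta>} (\<lambda>y. sin y * jacobi_weight a b (cos y))"
    proof -
      have "1 - cos y \<noteq> 0" "1 + cos y \<noteq> 0" if "y \<in> {\<delta>..pi-\<delta>}" for y
        using cos_bounds[OF that] \<delta>_pos by linarith+
      then show ?thesis unfolding jacobi_weight_def by (intro continuous_intros) auto
    qed
    show "0 < m" by (rule m)
    show "m \<le> sin y * jacobi_weight a b (cos y)" if "y \<in> {\<delta>..pi-\<delta>}" for y
      unfolding m_def by (rule jacobi_weight_ge[OF \<delta>(1,2) that])
  qed
  have "integral {\<delta>..pi-\<delta>} (\<lambda>y. (g y)\<^sup>2 * (sin y * jacobi_weight a b (cos y))) \<le> jacobi_h k a b"
  proof -
    have "integral {\<delta>..pi-\<delta>} (\<lambda>y. (g y)\<^sup>2 * (sin y * jacobi_weight a b (cos y)))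
        = integral {\<delta>..pi-\<delta>} (\<lambda>y. (jacobi k a b (cos y))\<^sup>2 * jacobi_weight a b (cos y) * sin y)"
      by (simp add: g_def mult_ac)
    also have "\<dots> \<le> integral {-1..1} (\<lambda>t. (jacobi k a b t)\<^sup>2 * jacobi_weight a b t)"
    proof (rule integral_cos_substitution_le)
      have "\<delta> \<in> {\<delta>..pi-\<delta>}" using \<delta> pi_gt3 by auto
      then have "cos \<delta> < 1" using cos_bounds(1)[of \<delta>] \<delta>_pos by linarith
      then show "continuous_on {-cos \<delta>..cos \<delta>} (\<lambda>t. (jacobi k a b t)\<^sup>2 * jacobi_weight a b t)"
        unfolding jacobi_weight_def jacobi_def by (intro continuous_intros) auto
      show "(\<lambda>t. (jacobi k a b t)\<^sup>2 * jacobi_weight a b t) integrable_on {-1..1}"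
        by (rule jacobi_h_eq_integral(2)[OF ab])
    qed (use \<delta> pi_gt3 in \<open>auto simp: jacobi_weight_nonneg\<close>)
    also have "\<dots> = jacobi_h k a b"
      by (rule jacobi_h_eq_integral(1)[OF ab, symmetric])
    finally show ?thesis .
  qed
  then have "(g (arccos t))\<^sup>2 \<le> 4 * (real k + 1) / (pi * m) * jacobi_h k a b"
    by (rule order_trans[OF nikolskii mult_left_mono]) (use m in auto)
  then have "(jacobi k a b t)\<^sup>2 \<le> 4 * (real k + 1) / (pi * m) * jacobi_h k a b"
    using t by (simp add: g_def)
  also have "4 * (real k + 1) / (pi * m) = 32 / pi * x\<^sup>2 * (256 * x\<^sup>2) powr (\<bar>a\<bar> + \<bar>b\<bar>)"
    using x by (simp add: m_def \<delta>_def x_def powr_divide field_simps power2_eq_square)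
  finally show ?thesis by (simp add: x_def)
qed

lemma jacobi_sq_le_poly_jacobi_h:
  assumes "a > -1" "b > -1"
  obtains C N where "0 \<le> C"
    and "\<And>k t. t \<in> {-1..1} \<Longrightarrow> (jacobi k a b t)\<^sup>2 \<le> C * real (Suc k) ^ N * jacobi_h k a b"
proof
  define c where "c = \<bar>a\<bar> + \<bar>b\<bar>"
  show "0 \<le> 32 / pi * 256 powr c" by simp
  fix k :: nat and t :: real
  assume t: "t \<in> {-1..1}"
  define x where "x = real k + 1"
  have x: "1 \<le> x" by (simp add: x_def)
  have "2 * c \<le> real (nat \<lceil>2 * c\<rceil>)" by linarith
  then have "x powr (2 * c) \<le> x ^ nat \<lceil>2 * c\<rceil>"
    using x powr_mono[of "2 * c" "real (nat \<lceil>2 * c\<rceil>)" x] by (simp add: powr_realpow)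
  moreover have "(256 * x\<^sup>2) powr c = 256 powr c * x powr (2 * c)"
  proof -
    have "(x\<^sup>2) powr c = (x powr 2) powr c"
      using x by (simp add: powr_numeral)
    also have "\<dots> = x powr (2 * c)" by (rule powr_powr)
    finally have "(x\<^sup>2) powr c = x powr (2 * c)" .
    then show ?thesis using x by (simp add: powr_mult)
  qed
  ultimately have "x\<^sup>2 * (256 * x\<^sup>2) powr c \<le> 256 powr c * (x ^ nat \<lceil>2 * c\<rceil> * x\<^sup>2)"
    by (simp add: mult_left_mono mult_ac)
  then have "x\<^sup>2 * (256 * x\<^sup>2) powr c \<le> 256 powr c * x ^ (nat \<lceil>2 * c\<rceil> + 2)"
    by (simp only: power_add)
  then have "32 / pi * (x\<^sup>2 * (256 * x\<^sup>2) powr c) * jacobi_h k a b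
      \<le> 32 / pi * (256 powr c * x ^ (nat \<lceil>2 * c\<rceil> + 2)) * jacobi_h k a b"
    using jacobi_h_nonneg[of k a b] by (intro mult_right_mono mult_left_mono) auto
  moreover have "(jacobi k a b t)\<^sup>2 \<le> 32 / pi * (x\<^sup>2 * (256 * x\<^sup>2) powr c) * jacobi_h k a b"
    using jacobi_sq_le_jacobi_h[OF assms t, of k] by (simp add: x_def c_def mult.assoc)
  moreover have "real (Suc k) = x" by (simp add: x_def)
  ultimately show "(jacobi k a b t)\<^sup>2 \<le> 32 / pi * 256 powr c * real (Suc k) ^ (nat \<lceil>2 * c\<rceil> + 2) * jacobi_h k a b"
    by (simp add: mult.assoc)
qed

section \<open>Bounding the coefficients and summing the series\<close>

lemma integrable_lborel_product:
  fixes u v :: "real \<Rightarrow> real"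
  assumes u: "integrable lborel u" and v: "integrable lborel v"
  shows "integrable lborel (\<lambda>p::real \<times> real. u (fst p) * v (snd p))"
    and "(\<integral>p. u (fst p) * v (snd p) \<partial>lborel) = (\<integral>x. u x \<partial>lborel) * (\<integral>y. v y \<partial>lborel)"
proof -
  have [measurable]: "u \<in> borel_measurable lborel" "v \<in> borel_measurable lborel"
    using u v by (auto intro: borel_measurable_integrable)
  have split: "(\<lambda>(x, y). u x * v y) = (\<lambda>p::real \<times> real. u (fst p) * v (snd p))" by auto
  have int: "integrable (lborel \<Otimes>\<^sub>M lborel) (\<lambda>(x, y). u x * v y)"
  proof (rule lborel_pair.Fubini_integrable)
    show "integrable lborel (\<lambda>x. \<integral>y. norm (case (x, y) of (x, y) \<Rightarrow> u x * v y) \<partial>lborel)"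
      using u by (simp add: abs_mult integrable_abs)
    show "AE x in lborel. integrable lborel (\<lambda>y. case (x, y) of (x, y) \<Rightarrow> u x * v y)"
      using v by simp
  qed measurable
  then show "integrable lborel (\<lambda>p::real \<times> real. u (fst p) * v (snd p))"
    by (simp add: split lborel_prod)
  have "(\<integral>x. (\<integral>y. u x * v y \<partial>lborel) \<partial>lborel) = integral\<^sup>L (lborel \<Otimes>\<^sub>M lborel) (\<lambda>(x, y). u x * v y)"
    using int by (rule lborel_pair.integral_fst)
  then show "(\<integral>p. u (fst p) * v (snd p) \<partial>lborel) = (\<integral>x. u x \<partial>lborel) * (\<integral>y. v y \<partial>lborel)"
    by (simp add: split lborel_prod)
qed

text \<open>No measurability of \<open>F\<close> is needed: if the integrand is not integrable, its integral is \<open>0\<close>.\<close>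
lemma abs_set_integral_Times_le:
  fixes F :: "real \<Rightarrow> real \<Rightarrow> real" and w w' :: "real \<Rightarrow> real"
  assumes F: "\<And>x y. x \<in> A \<Longrightarrow> y \<in> B \<Longrightarrow> \<bar>F x y\<bar> \<le> C"
    and w: "set_integrable lborel A w" "\<And>x. x \<in> A \<Longrightarrow> 0 \<le> w x"
    and w': "set_integrable lborel B w'" "\<And>y. y \<in> B \<Longrightarrow> 0 \<le> w' y"
  shows "\<bar>LINT p:(A \<times> B)|lborel. F (fst p) (snd p) * w (fst p) * w' (snd p)\<bar>
    \<le> C * ((LINT x:A|lborel. w x) * (LINT y:B|lborel. w' y))"
proof -
  define u where "u = (\<lambda>x. indicator A x * w x)"
  define v where "v = (\<lambda>y. indicator B y * w' y)"
  define f where "f = (\<lambda>p. indicator (A \<times> B) p * (F (fst p) (snd p) * w (fst p) * w' (snd p)))"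
  have u: "integrable lborel u" and v: "integrable lborel v"
    using w(1) w'(1) by (simp_all add: u_def v_def set_integrable_def)
  have "0 \<le> (LINT x:A|lborel. w x)" "0 \<le> (LINT y:B|lborel. w' y)"
    using w(2) w'(2) by (auto simp: set_lebesgue_integral_def indicator_def intro!: integral_nonneg)
  moreover have "0 \<le> C" if "A \<noteq> {}" "B \<noteq> {}"
    using that F by (meson abs_ge_zero equals0I order_trans)
  ultimately have bound_nonneg: "0 \<le> C * ((LINT x:A|lborel. w x) * (LINT y:B|lborel. w' y))"
    by (cases "A = {} \<or> B = {}") (auto simp: set_lebesgue_integral_def)
  have product: "integral\<^sup>L lborel (\<lambda>p. C * (u (fst p) * v (snd p)))
      = C * ((LINT x:A|lborel. w x) * (LINT y:B|lborel. w' y))"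
    by (simp only: integral_mult_right_zero integrable_lborel_product(2)[OF u v])
      (simp add: u_def v_def set_lebesgue_integral_def)
  have "\<bar>integral\<^sup>L lborel f\<bar> \<le> integral\<^sup>L lborel (\<lambda>p. C * (u (fst p) * v (snd p)))"
  proof (cases "integrable lborel f")
    case True
    have "\<bar>integral\<^sup>L lborel f\<bar> \<le> integral\<^sup>L lborel (\<lambda>p. norm (f p))"
      using integral_norm_bound[of lborel f] by simp
    also have "\<dots> \<le> integral\<^sup>L lborel (\<lambda>p. C * (u (fst p) * v (snd p)))"
    proof (rule integral_mono)
      show "integrable lborel (\<lambda>p. C * (u (fst p) * v (snd p)))"
        by (intro integrable_mult_right integrable_lborel_product(1) u v)
      fix p :: "real \<times> real"
      show "norm (f p) \<le> C * (u (fst p) * v (snd p))"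
      proof (cases "p \<in> A \<times> B")
        case True
        then have "\<bar>F (fst p) (snd p)\<bar> * (w (fst p) * w' (snd p)) \<le> C * (w (fst p) * w' (snd p))"
          using F w(2) w'(2) by (intro mult_right_mono) auto
        then show ?thesis
          using True w(2) w'(2) by (auto simp: f_def u_def v_def abs_mult mult.assoc)
      next
        case False
        then have "u (fst p) * v (snd p) = 0" by (auto simp: u_def v_def mem_Times_iff)
        then show ?thesis using False by (auto simp: f_def)
      qed
    qed (use True in simp)
    finally show ?thesis .
  next
    case False
    then show ?thesis
      unfolding product not_integrable_integral_eq[OF False] using bound_nonneg by simp
  qed
  then show ?thesis
    unfolding product by (simp add: f_def set_lebesgue_integral_def)
qed

lemma abs_mult_le_of_sq_le:
  fixes x y h E :: real
  assumes "x\<^sup>2 \<le> E * h" "y\<^sup>2 \<le> E * h"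
  shows "\<bar>x * y\<bar> \<le> E * h"
  using sum_squares_bound[of "\<bar>x\<bar>" "\<bar>y\<bar>"] assms by (simp add: abs_mult)

text \<open>The values \<open>P\<^sub>k(1)\<close> are absorbed into the integrand, where \<open>\<bar>P\<^sub>k(1) P\<^sub>k(t)\<bar> \<le> E h\<^sub>k\<close>
  cancels the normalisation \<open>1 / h\<^sub>k\<close>.\<close>
lemma abs_jacobi_coeff2_mult_jacobi_1_le:
  fixes Ki :: "real \<Rightarrow> real \<Rightarrow> real"
  assumes Ki: "\<And>t s. t \<in> {-1..1} \<Longrightarrow> s \<in> {-1..1} \<Longrightarrow> \<bar>Ki t s\<bar> \<le> B"
    and ab: "a > -1" "b > -1" "a' > -1" "b' > -1"
    and E: "0 \<le> E" "\<And>t. t \<in> {-1..1} \<Longrightarrow> (jacobi k a b t)\<^sup>2 \<le> E * jacobi_h k a b"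
    and E': "0 \<le> E'" "\<And>s. s \<in> {-1..1} \<Longrightarrow> (jacobi l a' b' s)\<^sup>2 \<le> E' * jacobi_h l a' b'"
  shows "\<bar>jacobi_coeff2 a b a' b' Ki k l * jacobi k a b 1 * jacobi l a' b' 1\<bar>
    \<le> B * E * E' * ((LINT t:{-1..1}|lborel. jacobi_weight a b t) * (LINT s:{-1..1}|lborel. jacobi_weight a' b' s))"
proof -
  define h where "h = jacobi_h k a b"
  define h' where "h' = jacobi_h l a' b'"
  define W where "W = (LINT t:{-1..1}|lborel. jacobi_weight a b t) * (LINT s:{-1..1}|lborel. jacobi_weight a' b' s)"
  define p where "p t = jacobi k a b 1 * jacobi k a b t" for t
  define q where "q s = jacobi l a' b' 1 * jacobi l a' b' s" for s
  have p: "\<bar>p t\<bar> \<le> E * h" if "t \<in> {-1..1}" for t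
    unfolding p_def h_def using E(2)[of 1] E(2)[OF that] by (intro abs_mult_le_of_sq_le) auto
  have q: "\<bar>q s\<bar> \<le> E' * h'" if "s \<in> {-1..1}" for s
    unfolding q_def h'_def using E'(2)[of 1] E'(2)[OF that] by (intro abs_mult_le_of_sq_le) auto
  have h: "0 \<le> h" "0 \<le> h'" by (simp_all add: h_def h'_def jacobi_h_nonneg)
  have B: "0 \<le> B" using Ki[of 0 0] by auto
  have W: "0 \<le> W"
    unfolding W_def set_lebesgue_integral_def
    by (intro mult_nonneg_nonneg integral_nonneg) (simp_all add: jacobi_weight_nonneg)
  define X where "X = (LINT x:({-1..1} \<times> {-1..1})|lborel. Ki (fst x) (snd x) * p (fst x) * q (snd x)
          * jacobi_weight a b (fst x) * jacobi_weight a' b' (snd x))"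
  have X: "\<bar>X\<bar> \<le> B * (E * h) * (E' * h') * W"
    unfolding X_def W_def
  proof (rule abs_set_integral_Times_le)
    fix t s :: real
    assume ts: "t \<in> {-1..1}" "s \<in> {-1..1}"
    have "\<bar>Ki t s\<bar> * \<bar>p t\<bar> * \<bar>q s\<bar> \<le> B * (E * h) * (E' * h')"
      using Ki[OF ts] p[OF ts(1)] q[OF ts(2)] B E(1) E'(1) h by (intro mult_mono) auto
    then show "\<bar>Ki t s * p t * q s\<bar> \<le> B * (E * h) * (E' * h')" by (simp add: abs_mult)
  qed (simp_all add: set_integrable_jacobi_weight ab jacobi_weight_nonneg)
  have "jacobi_coeff2 a b a' b' Ki k l * jacobi k a b 1 * jacobi l a' b' 1 = X / (h * h')"
    by (simp add: X_def jacobi_coeff2_def h_def h'_def p_def q_def jacobi_weight_def mult_ac)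
  also have "\<bar>X / (h * h')\<bar> \<le> B * E * E' * W"
  proof (cases "h * h' = 0")
    case True
    then show ?thesis using B W E(1) E'(1) by (simp only: div_by_0) simp
  next
    case False
    then have "0 < h * h'" using h by (simp add: less_le)
    then have "\<bar>X / (h * h')\<bar> = \<bar>X\<bar> / (h * h')" by (simp add: abs_divide)
    also have "\<dots> \<le> B * (E * h) * (E' * h') * W / (h * h')"
      using X \<open>0 < h * h'\<close> by (intro divide_right_mono) auto
    also have "\<dots> = B * E * E' * W" using False by (simp add: field_simps)
    finally show ?thesis .
  qed
  finally show ?thesis unfolding W_def .
qed

lemma summable_poly_times_geometric:
  fixes x :: real
  assumes "\<bar>x\<bar> < 1"
  shows "summable (\<lambda>n. real (Suc n) ^ N * x ^ n)"
  using assms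
proof (induction N arbitrary: x)
  case 0
  then show ?case by simp
next
  case (Suc N)
  have "summable (\<lambda>n. diffs (\<lambda>n. real n ^ N) n * x ^ n)"
  proof (rule termdiff_converges[of x 1])
    fix y :: real
    assume "norm y < 1"
    show "summable (\<lambda>n. real n ^ N * y ^ n)"
    proof (rule summable_comparison_test')
      show "summable (\<lambda>n. real (Suc n) ^ N * \<bar>y\<bar> ^ n)"
        using Suc.IH[of "\<bar>y\<bar>"] \<open>norm y < 1\<close> by simp
      show "norm (real n ^ N * y ^ n) \<le> real (Suc n) ^ N * \<bar>y\<bar> ^ n" for n
        by (simp add: abs_mult power_abs mult_right_mono power_mono)
    qed
  qed (use Suc.prems in simp)
  then show ?case by (simp add: diffs_def)
qed

lemma summable_on_poly_times_geometric:
  fixes x :: real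
  assumes "\<bar>x\<bar> < 1"
  shows "(\<lambda>n. real (Suc n) ^ N * \<bar>x\<bar> ^ n) summable_on UNIV"
  using summable_poly_times_geometric[of "\<bar>x\<bar>" N] assms
  by (intro summable_nonneg_imp_summable_on) auto

lemma summable_on_product_nonneg:
  fixes u v :: "nat \<Rightarrow> real"
  assumes "u summable_on UNIV" "v summable_on UNIV" "\<And>k. 0 \<le> u k" "\<And>l. 0 \<le> v l"
  shows "(\<lambda>(k, l). u k * v l) summable_on UNIV"
proof -
  have "(\<lambda>(k, l). u k * v l) summable_on Sigma UNIV (\<lambda>_. UNIV)"
  proof (rule summable_on_SigmaI[where g = "\<lambda>k. u k * infsum v UNIV"])
    show "((\<lambda>l. case (k, l) of (k, l) \<Rightarrow> u k * v l) has_sum u k * infsum v UNIV) UNIV" for k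
      using has_sum_cmult_right[OF has_sum_infsum[OF assms(2)], of "u k"] by simp
    show "(\<lambda>k. u k * infsum v UNIV) summable_on UNIV"
      using summable_on_cmult_left[OF assms(1)] by simp
  qed (use assms in auto)
  then show ?thesis by simp
qed

lemma summable_on_jacobi_double_series:
  fixes Ki :: "real \<Rightarrow> real \<Rightarrow> real"
  assumes Ki: "\<And>t s. t \<in> {-1..1} \<Longrightarrow> s \<in> {-1..1} \<Longrightarrow> \<bar>Ki t s\<bar> \<le> B"
    and ab: "a > -1" "b > -1" "a' > -1" "b' > -1"
    and r: "\<bar>r\<bar> < 1" "\<bar>\<rho>\<bar> < 1"
  shows "(\<lambda>(k, l). jacobi_coeff2 a b a' b' Ki k l * jacobi k a b 1 * jacobi l a' b' 1
      * r ^ k * \<rho> ^ l) summable_on UNIV"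
proof -
  obtain C N where C: "0 \<le> C"
    "\<And>k t. t \<in> {-1..1} \<Longrightarrow> (jacobi k a b t)\<^sup>2 \<le> C * real (Suc k) ^ N * jacobi_h k a b"
    using jacobi_sq_le_poly_jacobi_h[OF ab(1,2)] by blast
  obtain C' N' where C': "0 \<le> C'"
    "\<And>l s. s \<in> {-1..1} \<Longrightarrow> (jacobi l a' b' s)\<^sup>2 \<le> C' * real (Suc l) ^ N' * jacobi_h l a' b'"
    using jacobi_sq_le_poly_jacobi_h[OF ab(3,4)] by blast
  define W where "W = (LINT t:{-1..1}|lborel. jacobi_weight a b t) * (LINT s:{-1..1}|lborel. jacobi_weight a' b' s)"
  define u where "u = (\<lambda>k. C * (real (Suc k) ^ N * \<bar>r\<bar> ^ k))"
  define v where "v = (\<lambda>l. C' * (real (Suc l) ^ N' * \<bar>\<rho>\<bar> ^ l))"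
  have "u summable_on UNIV" "v summable_on UNIV"
    unfolding u_def v_def by (intro summable_on_cmult_right summable_on_poly_times_geometric r)+
  then have "(\<lambda>x. B * W * (case x of (k, l) \<Rightarrow> u k * v l)) summable_on UNIV"
    by (intro summable_on_cmult_right summable_on_product_nonneg) (auto simp: u_def v_def C(1) C'(1))
  then have "(\<lambda>x. norm (case x of (k, l) \<Rightarrow> jacobi_coeff2 a b a' b' Ki k l * jacobi k a b 1
      * jacobi l a' b' 1 * r ^ k * \<rho> ^ l)) summable_on UNIV"
  proof (rule Infinite_Sum.abs_summable_on_comparison_test')
    fix x :: "nat \<times> nat"
    obtain k l where x: "x = (k, l)" by force
    have "\<bar>jacobi_coeff2 a b a' b' Ki k l * jacobi k a b 1 * jacobi l a' b' 1\<bar>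
        \<le> B * (C * real (Suc k) ^ N) * (C' * real (Suc l) ^ N') * W"
      unfolding W_def
      by (rule abs_jacobi_coeff2_mult_jacobi_1_le[OF Ki ab]) (use C C' in simp_all)
    then have "\<bar>jacobi_coeff2 a b a' b' Ki k l * jacobi k a b 1 * jacobi l a' b' 1\<bar> * (\<bar>r\<bar> ^ k * \<bar>\<rho>\<bar> ^ l)
        \<le> B * (C * real (Suc k) ^ N) * (C' * real (Suc l) ^ N') * W * (\<bar>r\<bar> ^ k * \<bar>\<rho>\<bar> ^ l)"
      by (rule mult_right_mono) simp
    also have "\<dots> = B * W * (u k * v l)" by (simp add: u_def v_def mult_ac)
    finally show "norm (case x of (k, l) \<Rightarrow> jacobi_coeff2 a b a' b' Ki k l * jacobi k a b 1
        * jacobi l a' b' 1 * r ^ k * \<rho> ^ l) \<le> B * W * (case x of (k, l) \<Rightarrow> u k * v l)"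
      by (simp add: x abs_mult power_abs mult_ac)
  qed
  then show ?thesis by (rule abs_summable_summable)
qed

theorem lemma2p5:
  fixes M H :: tph and K :: "pt \<times> pt \<Rightarrow> pt \<times> pt \<Rightarrow> real"
    and Ki :: "real \<Rightarrow> real \<Rightarrow> real" and r \<rho> :: real
  assumes "tph_valid M" and "tph_valid H"
    and "continuous_on ((tph_pts M \<times> tph_pts H) \<times> (tph_pts M \<times> tph_pts H))
           (\<lambda>(p, q). K p q)"
    and "\<forall>x\<in>tph_pts M. \<forall>y\<in>tph_pts M. \<forall>w\<in>tph_pts H. \<forall>z\<in>tph_pts H.
           K (x, w) (y, z) = Ki (tph_cos M x y) (tph_cos H w z)"
    and "pos_def_kernel (tph_pts M \<times> tph_pts H) K"
    and "r \<in> {-1<..<1}" and "\<rho> \<in> {-1<..<1}"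
  shows "(\<lambda>(k, l). jacobi_coeff2 (tph_alpha M) (tph_beta M) (tph_alpha H) (tph_beta H) Ki k l
            * jacobi k (tph_alpha M) (tph_beta M) 1 * jacobi l (tph_alpha H) (tph_beta H) 1
            * r ^ k * \<rho> ^ l) summable_on UNIV"
proof -
  obtain B where "\<And>t s. t \<in> {-1..1} \<Longrightarrow> s \<in> {-1..1} \<Longrightarrow> \<bar>Ki t s\<bar> \<le> B"
    using isotropic_part_bounded[OF tph_has_cos_path tph_has_cos_path assms(3,4)] assms(1,2) by blast
  then show ?thesis
    using tph_alpha_beta_gt[OF assms(1)] tph_alpha_beta_gt[OF assms(2)] assms(6,7)
    by (intro summable_on_jacobi_double_series) auto
qed

end
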